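(* Let $\tau\in\mathbb N$ and let $Y_1,Y_2,\dots$ be independent with $Y_i\sim N_p(\mu_1,\sigma^2I)$ for $i\le\tau$ and $Y_i\sim N_p(\mu_2,\sigma^2I)$ for $i>\tau$, $\sigma>0$. Let $\phi=\|\mu_1-\mu_2\|_2$, $k=\|\mu_1-\mu_2\|_0\ge1$. Let $t>\tau$. Then there exists $s\in\mathcal S^{(t)}$ with $k/2\le s\le k$ if $k<\sqrt{p\log t}$ and $s=p$ if $k\ge\sqrt{p\log t}$, and for every $\delta\in(0,1)$ there is a constant $C>0$ depending only on $\delta$, such that for every $\lambda>0$ and every integer $1\le g\le t-\tau$, $$\mathbb P\Big\{A^{(t)}_{s,g}-\lambda z(s,p,t)\ge\psi-(C+2\lambda)z(k,p,t)-C\psi^{1/2}\Big\}\ge1-\delta,\qquad\psi=\frac{g\tau^2}{t(t-g)}\frac{\phi^2}{\sigma^2}.$$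
   Context: $\log$ natural. $\|v\|_0$ is the number of nonzero entries. CUSUM vector: $C^{(t)}_g=\{g/(t(t-g))\}^{1/2}\sum_{i=1}^{t-g}Y_i-\{(t-g)/(tg)\}^{1/2}\sum_{i=t-g+1}^tY_i$, entries $C^{(t)}_g(j)$. Threshold: $a^2(s,t)=4\log(ep s^{-2}\log t)\,\mathbb 1\{s\le\sqrt{p\log t}\}$, $a(s,t)\ge0$. For $a\ge0$, $\nu_a=\mathbb E\{Z^2\mid|Z|>a\}$, $Z\sim N(0,1)$. $A^{(t)}_{s,g}=\sum_{j=1}^p\{C^{(t)}_g(j)^2/\sigma^2-\nu_{a(s,t)}\}\mathbb 1\{|C^{(t)}_g(j)|/\sigma>a(s,t)\}$. $\mathcal S^{(t)}=\{1,2,4,\dots,2^{\lfloor\log_2(\sqrt{p\log t}\wedge p)\rfloor}\}\cup\{p\}$. $z(s,p,t)=\sqrt{p\log t}$ if $s>\sqrt{p\log t}$, and $z(s,p,t)=s\log\{ep\log t/s^2\}\vee\log t$ otherwise. *)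

theory Defs
  imports "HOL-Probability.Probability"
begin

text \<open>A realised data sequence is y :: nat => nat => real, with y i j the j-th
coordinate (j < p) of observation Y_i (i >= 1).\<close>

definition cusum :: "(nat \<Rightarrow> nat \<Rightarrow> real) \<Rightarrow> nat \<Rightarrow> nat \<Rightarrow> nat \<Rightarrow> real" where
  "cusum y t g j =
     sqrt (real g / (real t * (real t - real g))) * (\<Sum>i=1..t-g. y i j)
   - sqrt ((real t - real g) / (real t * real g)) * (\<Sum>i=t-g+1..t. y i j)"

definition thr_sq :: "nat \<Rightarrow> nat \<Rightarrow> nat \<Rightarrow> real" where
  "thr_sq p s t = 4 * ln (exp 1 * real p * (real s) powi (-2) * ln (real t))
                  * (if real s \<le> sqrt (real p * ln (real t)) then 1 else 0)"

definition thr :: "nat \<Rightarrow> nat \<Rightarrow> nat \<Rightarrow> real" where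
  "thr p s t = sqrt (thr_sq p s t)"

definition nu :: "real \<Rightarrow> real" where
  "nu a = (LINT z:{z. \<bar>z\<bar> > a}|lborel. z\<^sup>2 * std_normal_density z)
        / (LINT z:{z. \<bar>z\<bar> > a}|lborel. std_normal_density z)"

definition Astat :: "nat \<Rightarrow> real \<Rightarrow> (nat \<Rightarrow> nat \<Rightarrow> real) \<Rightarrow> nat \<Rightarrow> nat \<Rightarrow> nat \<Rightarrow> real" where
  "Astat p \<sigma> y t s g =
     (\<Sum>j<p. ((cusum y t g j)\<^sup>2 / \<sigma>\<^sup>2 - nu (thr p s t))
            * (if \<bar>cusum y t g j\<bar> / \<sigma> > thr p s t then 1 else 0))"

definition Sgrid :: "nat \<Rightarrow> nat \<Rightarrow> nat set" where
  "Sgrid p t = {s. \<exists>i::nat. s = 2 ^ i \<and>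
       int i \<le> \<lfloor>log 2 (min (sqrt (real p * ln (real t))) (real p))\<rfloor>} \<union> {p}"

definition zfun :: "nat \<Rightarrow> nat \<Rightarrow> nat \<Rightarrow> real" where
  "zfun s p t = (if real s > sqrt (real p * ln (real t)) then sqrt (real p * ln (real t))
                 else max (real s * ln (exp 1 * real p * ln (real t) / (real s)\<^sup>2)) (ln (real t)))"

end

(*
  Standardise the CUSUM vector: C_g(j) / sigma = m_j + Z_j with Z_1, ..., Z_p independent N(0,1)
  and m_j = sqrt(g / (t (t - g))) tau (mu1_j - mu2_j) / sigma, so that sum_j m_j^2 = psi and
  exactly k of the m_j are nonzero.  Off the support of mu1 - mu2 the summand of A is centred by
  the choice of nu_a; on the support it is at least (m_j + Z_j)^2 - nu_a because nu_a >= a^2.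
  Hence A >= psi - k (nu_a - 1) + S, where S is a sum of independent centred variables with
  Var S <= p E[Z^4; |Z| > a] + 4 psi + 2 k, and by Chebyshev S > - sqrt (Var S / delta) with
  probability at least 1 - delta.  For a^2 = 4 log(e p log t / s^2) and k/2 <= s <= k, the
  Gaussian tail bounds nu_a <= 27 a^2 and E[Z^4; |Z| > a] <= 5 a^3 exp(-a^2/2) give
  k (nu_a - 1) <= 324 z(k,p,t) and p E[Z^4; |Z| > a] <= 160 k^2 <= 160 z(k,p,t)^2; in the dense
  case a = 0 and these terms are O(p log t) = O(z(k,p,t)^2).  This gives C(delta) = 337 / sqrt delta.
*)

theory Submission
  imports Defs "HOL-Real_Asymp.Real_Asymp"
begin

section \<open>Tail moments of the standard normal distribution\<close>

definition gauss_kernel :: "real \<Rightarrow> real" where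
  "gauss_kernel x = exp (- x\<^sup>2 / 2)"

lemma gauss_kernel_pos: "gauss_kernel x > 0"
  by (simp add: gauss_kernel_def)

lemma gauss_kernel_minus: "gauss_kernel (- x) = gauss_kernel x"
  by (simp add: gauss_kernel_def)

lemma gauss_kernel_antimono: "0 \<le> x \<Longrightarrow> x \<le> y \<Longrightarrow> gauss_kernel y \<le> gauss_kernel x"
  unfolding gauss_kernel_def by (simp add: power_mono)

lemma std_normal_density_eq_gauss_kernel: "std_normal_density x = gauss_kernel x / sqrt (2 * pi)"
  unfolding std_normal_density_def gauss_kernel_def by simp

lemma has_bochner_integral_atLeast_FTC:
  fixes G f :: "real \<Rightarrow> real"
  assumes f_borel: "f \<in> borel_measurable borel"
    and deriv: "\<And>x. a \<le> x \<Longrightarrow> (G has_real_derivative - f x) (at x)"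
    and nonneg: "\<And>x. a \<le> x \<Longrightarrow> 0 \<le> f x"
    and lim: "(G \<longlongrightarrow> 0) at_top"
  shows "has_bochner_integral lborel (\<lambda>x. indicator {a..} x * f x) (G a)"
proof (rule has_bochner_integral_nn_integral)
  have deriv': "((\<lambda>x. - G x) has_real_derivative f x) (at x)" if "a \<le> x" for x
    using DERIV_minus[OF deriv[OF that]] by simp
  have "- G a \<le> - G x" if "a \<le> x" for x
    using that deriv' nonneg by (intro DERIV_nonneg_imp_nondecreasing[OF that]) blast
  then show "0 \<le> G a"
    using lim by (intro tendsto_upperbound[of G 0 at_top "G a"]) (auto simp: eventually_at_top_linorder)
  have "((\<lambda>x. - G x) \<longlongrightarrow> 0) at_top"
    using tendsto_minus[OF lim] by simp
  from nn_integral_FTC_atLeast[OF f_borel deriv' nonneg this]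
  have "(\<integral>\<^sup>+x. ennreal (f x) * indicator {a..} x \<partial>lborel) = ennreal (G a)"
    by simp
  then show "(\<integral>\<^sup>+x. ennreal (indicator {a..} x * f x) \<partial>lborel) = ennreal (G a)"
    by (subst nn_integral_cong[where v = "\<lambda>x. ennreal (f x) * indicator {a..} x"])
      (auto split: split_indicator)
  show "AE x in lborel. 0 \<le> indicator {a..} x * f x"
    using nonneg by (auto split: split_indicator)
qed (use f_borel in auto)

lemma has_bochner_integral_gauss_kernel_tail_3:
  assumes "a \<ge> 0"
  shows "has_bochner_integral lborel (\<lambda>x. indicator {a..} x * (x ^ 3 * gauss_kernel x))
     ((a\<^sup>2 + 2) * gauss_kernel a)"
proof (rule has_bochner_integral_atLeast_FTC)
  show "((\<lambda>x. (x\<^sup>2 + 2) * gauss_kernel x) \<longlongrightarrow> 0) at_top"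
    unfolding gauss_kernel_def by real_asymp
  show "((\<lambda>x. (x\<^sup>2 + 2) * gauss_kernel x) has_real_derivative - (x ^ 3 * gauss_kernel x)) (at x)" for x
    unfolding gauss_kernel_def
    by (auto intro!: derivative_eq_intros simp: algebra_simps power2_eq_square power3_eq_cube)
  show "0 \<le> x ^ 3 * gauss_kernel x" if "a \<le> x" for x
    using assms that gauss_kernel_pos[of x] by simp
qed (simp add: gauss_kernel_def)

lemma has_bochner_integral_gauss_kernel_tail_5:
  assumes "a \<ge> 0"
  shows "has_bochner_integral lborel (\<lambda>x. indicator {a..} x * (x ^ 5 * gauss_kernel x))
     ((a ^ 4 + 4 * a\<^sup>2 + 8) * gauss_kernel a)"
proof (rule has_bochner_integral_atLeast_FTC)
  show "((\<lambda>x. (x ^ 4 + 4 * x\<^sup>2 + 8) * gauss_kernel x) \<longlongrightarrow> 0) at_top"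
    unfolding gauss_kernel_def by real_asymp
  show "((\<lambda>x. (x ^ 4 + 4 * x\<^sup>2 + 8) * gauss_kernel x) has_real_derivative
      - (x ^ 5 * gauss_kernel x)) (at x)" for x
    unfolding gauss_kernel_def
    by (auto intro!: derivative_eq_intros simp: algebra_simps power2_eq_square eval_nat_numeral)
  show "0 \<le> x ^ 5 * gauss_kernel x" if "a \<le> x" for x
    using assms that gauss_kernel_pos[of x] by simp
qed (simp add: gauss_kernel_def)

definition normal_tail_moment :: "nat \<Rightarrow> real \<Rightarrow> real" where
  "normal_tail_moment k a = (LINT z:{z. \<bar>z\<bar> > a}|lborel. z ^ k * std_normal_density z)"

lemma normal_tail_moment_eq_integral:
  "normal_tail_moment k a =
     (\<integral>z. indicator {z. \<bar>z\<bar> > a} z * (z ^ k * std_normal_density z) \<partial>lborel)"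
  unfolding normal_tail_moment_def set_lebesgue_integral_def by simp

lemma integrable_normal_tail_moment:
  "integrable lborel (\<lambda>z. indicator {z. \<bar>z\<bar> > a} z * (z ^ k * std_normal_density z))"
proof -
  have "integrable lborel (\<lambda>z. (std_normal_density z * z ^ k) * indicator {z. \<bar>z\<bar> > a} z)"
    by (rule integrable_real_mult_indicator) (auto intro: integrable_std_normal_moment)
  then show ?thesis by (simp add: ac_simps)
qed

lemma nu_eq_normal_tail_moment: "nu a = normal_tail_moment 2 a / normal_tail_moment 0 a"
  unfolding nu_def normal_tail_moment_def by simp

lemma normal_tail_moment_nonneg: "even k \<Longrightarrow> normal_tail_moment k a \<ge> 0"
  unfolding normal_tail_moment_eq_integral
  by (intro integral_nonneg_AE AE_I2 mult_nonneg_nonneg) (auto simp: zero_le_even_power)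

lemma normal_tail_moment_at_0:
  assumes "even k"
  shows "normal_tail_moment k 0 = fact k / (2 ^ (k div 2) * fact (k div 2))"
proof -
  have "normal_tail_moment k 0 = (\<integral>z. std_normal_density z * z ^ k \<partial>lborel)"
    unfolding normal_tail_moment_eq_integral
  proof (intro integral_cong_AE)
    show "AE z in lborel. indicator {z. \<bar>z\<bar> > 0} z * (z ^ k * std_normal_density z) =
        std_normal_density z * z ^ k"
      using AE_lborel_singleton[of 0] by eventually_elim (auto split: split_indicator)
  qed auto
  also have "\<dots> = fact k / (2 ^ (k div 2) * fact (k div 2))"
    using integral_std_normal_moment_even[of "k div 2"] assms by simp
  finally show ?thesis .
qed

lemma nu_0: "nu 0 = 1"
  and normal_tail_moment_4_at_0: "normal_tail_moment 4 0 = 3"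
  using normal_tail_moment_at_0[of 0] normal_tail_moment_at_0[of 2] normal_tail_moment_at_0[of 4]
  by (simp_all add: nu_eq_normal_tail_moment fact_numeral)

text \<open>Beyond the threshold \<open>|z|^k \<le> |z|^(k+1) / a\<close>; the factor 2 accounts for both tails.\<close>

lemma normal_tail_moment_le_odd_tail:
  assumes a: "a > 0" and k: "even k"
    and I: "has_bochner_integral lborel (\<lambda>x. indicator {a..} x * (x ^ (k + 1) * gauss_kernel x)) I"
  shows "normal_tail_moment k a \<le> 2 * I / (a * sqrt (2 * pi))"
proof -
  define g where "g x = indicator {a..} x * (x ^ (k + 1) * gauss_kernel x)" for x :: real
  have g_int: "integrable lborel g" and g_I: "integral\<^sup>L lborel g = I"
    using I unfolding g_def by (simp_all add: has_bochner_integral_iff)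
  have g_refl_int: "integrable lborel (\<lambda>x. g (0 + (-1) * x))"
    by (rule lborel_integrable_real_affine[OF g_int]) simp
  have g_refl_I: "(\<integral>x. g (0 + (-1) * x) \<partial>lborel) = I"
    using lborel_integral_real_affine[of "-1" g 0] g_I by simp
  have g_nonneg: "g x \<ge> 0" for x
    unfolding g_def using gauss_kernel_pos[of x] a by (auto split: split_indicator)
  have pointwise: "indicator {z. \<bar>z\<bar> > a} z * (z ^ k * std_normal_density z)
      \<le> (g z + g (0 + (-1) * z)) / (a * sqrt (2 * pi))" for z
  proof (cases "\<bar>z\<bar> > a")
    case True
    have "\<bar>z\<bar> ^ k * a \<le> \<bar>z\<bar> ^ k * \<bar>z\<bar>" using True by (intro mult_left_mono) auto
    then have "\<bar>z\<bar> ^ k \<le> \<bar>z\<bar> ^ (k + 1) / a" using a by (simp add: field_simps)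
    have "z ^ k * std_normal_density z = \<bar>z\<bar> ^ k * gauss_kernel z / sqrt (2 * pi)"
      using k by (simp add: std_normal_density_eq_gauss_kernel power_even_abs)
    also have "\<dots> \<le> (\<bar>z\<bar> ^ (k + 1) / a) * gauss_kernel z / sqrt (2 * pi)"
      using \<open>\<bar>z\<bar> ^ k \<le> \<bar>z\<bar> ^ (k + 1) / a\<close> gauss_kernel_pos[of z]
      by (intro divide_right_mono mult_right_mono) auto
    also have "\<dots> = (g z + g (0 + (-1) * z)) / (a * sqrt (2 * pi))"
    proof -
      have "\<bar>z\<bar> ^ (k + 1) * gauss_kernel z = g z + g (0 + (-1) * z)"
        using True a k unfolding g_def by (auto simp: gauss_kernel_minus split: split_indicator)
      then show ?thesis by (simp add: field_simps)
    qed
    finally show ?thesis using True by simp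
  next
    case False
    then show ?thesis using g_nonneg[of z] g_nonneg[of "0 + (-1) * z"] a by simp
  qed
  have "normal_tail_moment k a \<le> (\<integral>z. (g z + g (0 + (-1) * z)) / (a * sqrt (2 * pi)) \<partial>lborel)"
    unfolding normal_tail_moment_eq_integral
    by (intro integral_mono integrable_normal_tail_moment integrable_divide
        Bochner_Integration.integrable_add g_int g_refl_int pointwise)
  also have "\<dots> = 2 * I / (a * sqrt (2 * pi))"
    using g_int g_refl_int g_I g_refl_I by simp
  finally show ?thesis .
qed

lemma normal_tail_moment_0_lower:
  assumes a: "a > 0"
  shows "gauss_kernel (a + 1 / a) / (a * sqrt (2 * pi)) \<le> normal_tail_moment 0 a"
proof -
  define b where "b = a + 1 / a"
  have ab: "a \<le> b" using a by (simp add: b_def)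
  have "gauss_kernel (a + 1 / a) / (a * sqrt (2 * pi)) =
      (\<integral>z. indicator {a<..b} z * (gauss_kernel b / sqrt (2 * pi)) \<partial>lborel)"
    using a by (simp add: b_def field_simps)
  also have "\<dots> \<le> normal_tail_moment 0 a"
    unfolding normal_tail_moment_eq_integral
  proof (intro integral_mono integrable_normal_tail_moment)
    have "integrable lborel (\<lambda>z. (gauss_kernel b / sqrt (2 * pi)) * indicator {a<..b} z)"
      using ab by (intro integrable_mult_right integrable_real_indicator) auto
    then show "integrable lborel (\<lambda>z. indicator {a<..b} z * (gauss_kernel b / sqrt (2 * pi)))"
      by (simp add: ac_simps)
    show "indicator {a<..b} z * (gauss_kernel b / sqrt (2 * pi))
        \<le> indicator {z. \<bar>z\<bar> > a} z * (z ^ 0 * std_normal_density z)" for z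
      using a gauss_kernel_antimono[of z b] gauss_kernel_pos[of z]
      by (auto simp: std_normal_density_eq_gauss_kernel split: split_indicator intro!: divide_right_mono)
  qed
  finally show ?thesis .
qed

lemma normal_tail_moment_0_pos: "a \<ge> 0 \<Longrightarrow> normal_tail_moment 0 a > 0"
proof (cases "a = 0")
  case True
  then show ?thesis using normal_tail_moment_at_0[of 0] by simp
next
  case False
  assume "a \<ge> 0"
  then have "a > 0" using False by simp
  have "0 < gauss_kernel (a + 1 / a) / (a * sqrt (2 * pi))"
    using \<open>a > 0\<close> gauss_kernel_pos by simp
  then show ?thesis using normal_tail_moment_0_lower[OF \<open>a > 0\<close>] by linarith
qed

lemma nu_ge_square:
  assumes "a \<ge> 0"
  shows "a\<^sup>2 \<le> nu a"
proof -
  have "a\<^sup>2 * normal_tail_moment 0 a =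
      (\<integral>z. a\<^sup>2 * (indicator {z. \<bar>z\<bar> > a} z * (z ^ 0 * std_normal_density z)) \<partial>lborel)"
    unfolding normal_tail_moment_eq_integral by simp
  also have "\<dots> \<le> normal_tail_moment 2 a"
    unfolding normal_tail_moment_eq_integral
  proof (intro integral_mono integrable_normal_tail_moment integrable_mult_right)
    fix z
    have "\<bar>z\<bar> > a \<Longrightarrow> a\<^sup>2 \<le> z\<^sup>2"
      using assms by (metis abs_le_square_iff abs_of_nonneg less_imp_le)
    then show "a\<^sup>2 * (indicator {z. \<bar>z\<bar> > a} z * (z ^ 0 * std_normal_density z))
        \<le> indicator {z. \<bar>z\<bar> > a} z * (z ^ 2 * std_normal_density z)"
      by (auto intro!: mult_right_mono split: split_indicator)
  qed
  finally show ?thesis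
    using normal_tail_moment_0_pos[OF assms] by (simp add: nu_eq_normal_tail_moment pos_le_divide_eq)
qed

lemma nu_le:
  assumes a: "a \<ge> 2"
  shows "nu a \<le> 27 * a\<^sup>2"
proof -
  have a0: "a > 0" and a2: "a\<^sup>2 \<ge> 4" using a power_mono[of 2 a 2] by auto
  have upper: "normal_tail_moment 2 a \<le> 2 * ((a\<^sup>2 + 2) * gauss_kernel a) / (a * sqrt (2 * pi))"
    using normal_tail_moment_le_odd_tail[of a 2] has_bochner_integral_gauss_kernel_tail_3[of a] a0 by simp
  have lower: "gauss_kernel (a + 1 / a) / (a * sqrt (2 * pi)) \<le> normal_tail_moment 0 a"
    by (rule normal_tail_moment_0_lower[OF a0])
  have "nu a \<le> (2 * ((a\<^sup>2 + 2) * gauss_kernel a) / (a * sqrt (2 * pi)))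
      / (gauss_kernel (a + 1 / a) / (a * sqrt (2 * pi)))"
    unfolding nu_eq_normal_tail_moment
    using upper lower a0 gauss_kernel_pos normal_tail_moment_nonneg[of 2 a]
    by (intro frac_le) auto
  also have "\<dots> = 2 * (a\<^sup>2 + 2) * exp (1 + 1 / (2 * a\<^sup>2))"
    using a0 by (simp add: gauss_kernel_def field_simps power2_eq_square flip: exp_add exp_diff)
  also have "\<dots> \<le> 2 * (3 / 2 * a\<^sup>2) * 9"
  proof (rule mult_mono)
    have "1 / (2 * a\<^sup>2) \<le> 1" using a2 by (simp add: divide_le_eq)
    then have "exp (1 + 1 / (2 * a\<^sup>2)) \<le> exp 1 * exp 1" by (simp flip: exp_add)
    also have "\<dots> \<le> 3 * 3" using exp_le by (intro mult_mono) auto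
    finally show "exp (1 + 1 / (2 * a\<^sup>2)) \<le> 9" by simp
  qed (use a2 in auto)
  finally show ?thesis by simp
qed

lemma normal_tail_moment_4_le:
  assumes a: "a \<ge> 2"
  shows "normal_tail_moment 4 a \<le> 5 * a ^ 3 * gauss_kernel a"
proof -
  have a0: "a > 0" and a2: "a\<^sup>2 \<ge> 4" using a power_mono[of 2 a 2] by auto
  have upper: "normal_tail_moment 4 a \<le> 2 * ((a ^ 4 + 4 * a\<^sup>2 + 8) * gauss_kernel a) / (a * sqrt (2 * pi))"
    using normal_tail_moment_le_odd_tail[of a 4] has_bochner_integral_gauss_kernel_tail_5[of a] a0 by simp
  have "a ^ 4 = a\<^sup>2 * a\<^sup>2" by (simp add: power2_eq_square eval_nat_numeral)
  then have poly: "a ^ 4 + 4 * a\<^sup>2 + 8 \<le> 5 / 2 * a ^ 4"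
    using a2 mult_right_mono[of 4 "a\<^sup>2" "a\<^sup>2"] by simp
  have "sqrt (2 * pi) \<ge> 1" using pi_gt3 by simp
  then have "2 * ((a ^ 4 + 4 * a\<^sup>2 + 8) * gauss_kernel a) / (a * sqrt (2 * pi))
      \<le> 2 * ((a ^ 4 + 4 * a\<^sup>2 + 8) * gauss_kernel a) / a"
    using a0 gauss_kernel_pos[of a] by (intro divide_left_mono) (auto intro!: add_nonneg_nonneg)
  also have "\<dots> \<le> 2 * (5 / 2 * a ^ 4 * gauss_kernel a) / a"
    using a0 gauss_kernel_pos[of a] poly by (intro divide_right_mono mult_left_mono mult_right_mono) auto
  also have "\<dots> = 5 * a ^ 3 * gauss_kernel a" using a0 by (simp add: field_simps eval_nat_numeral)
  finally show ?thesis using upper by simp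
qed

section \<open>A second-moment lower bound for the thresholded sum\<close>

definition thresholded_square :: "real \<Rightarrow> real \<Rightarrow> real" where
  "thresholded_square a x = (x\<^sup>2 - nu a) * (if \<bar>x\<bar> > a then 1 else 0)"

lemma borel_measurable_thresholded_square [measurable]:
  "thresholded_square a \<in> borel_measurable borel"
  unfolding thresholded_square_def by measurable

lemma thresholded_square_ge:
  assumes "a\<^sup>2 \<le> nu a"
  shows "x\<^sup>2 - nu a \<le> thresholded_square a x"
proof (cases "\<bar>x\<bar> > a")
  case False
  then have "x\<^sup>2 \<le> a\<^sup>2"
    using power_mono[of "\<bar>x\<bar>" a 2] by simp
  then show ?thesis using False assms by (simp add: thresholded_square_def)
qed (simp add: thresholded_square_def)

lemma (in prob_space) expectation_square_sum_indep:
  fixes V :: "'i \<Rightarrow> 'a \<Rightarrow> real"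
  assumes "finite J" "indep_vars (\<lambda>_. borel) V J"
    and "\<And>j. j \<in> J \<Longrightarrow> integrable M (\<lambda>\<omega>. (V j \<omega>)\<^sup>2)"
    and "\<And>j. j \<in> J \<Longrightarrow> expectation (V j) = 0"
  shows "integrable M (\<lambda>\<omega>. (\<Sum>j\<in>J. V j \<omega>)\<^sup>2) \<and>
    expectation (\<lambda>\<omega>. (\<Sum>j\<in>J. V j \<omega>)\<^sup>2) = (\<Sum>j\<in>J. expectation (\<lambda>\<omega>. (V j \<omega>)\<^sup>2))"
  using assms
proof (induction J rule: finite_induct)
  case (insert i J)
  have int_V: "integrable M (V j)" if "j \<in> insert i J" for j
    using that insert.prems unfolding indep_vars_def by (blast intro: square_integrable_imp_integrable)
  have IH: "integrable M (\<lambda>\<omega>. (\<Sum>j\<in>J. V j \<omega>)\<^sup>2) \<and>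
      expectation (\<lambda>\<omega>. (\<Sum>j\<in>J. V j \<omega>)\<^sup>2) = (\<Sum>j\<in>J. expectation (\<lambda>\<omega>. (V j \<omega>)\<^sup>2))"
    using insert by (intro insert.IH) (auto intro: indep_vars_subset)
  have int_sum: "integrable M (\<lambda>\<omega>. \<Sum>j\<in>J. V j \<omega>)" using int_V by auto
  have indep: "indep_var borel (V i) borel (\<lambda>\<omega>. \<Sum>j\<in>J. V j \<omega>)"
    using insert by (intro indep_vars_sum) auto
  have int_cross: "integrable M (\<lambda>\<omega>. V i \<omega> * (\<Sum>j\<in>J. V j \<omega>))"
    by (rule indep_var_integrable[OF indep int_V int_sum]) simp
  have cross: "expectation (\<lambda>\<omega>. V i \<omega> * (\<Sum>j\<in>J. V j \<omega>)) = 0"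
    using indep_var_lebesgue_integral[OF indep int_V int_sum] insert.prems(3) by simp
  have square: "(\<lambda>\<omega>. (\<Sum>j\<in>insert i J. V j \<omega>)\<^sup>2) =
      (\<lambda>\<omega>. (V i \<omega>)\<^sup>2 + 2 * (V i \<omega> * (\<Sum>j\<in>J. V j \<omega>)) + (\<Sum>j\<in>J. V j \<omega>)\<^sup>2)"
    using insert by (simp add: power2_eq_square algebra_simps)
  show ?case
    unfolding square using IH int_cross cross insert by simp
qed simp

lemma (in prob_space) prob_ge_minus_sqrt_second_moment:
  assumes S [measurable]: "random_variable borel S"
    and int: "integrable M (\<lambda>\<omega>. (S \<omega>)\<^sup>2)" and mean: "expectation S = 0"
    and B: "expectation (\<lambda>\<omega>. (S \<omega>)\<^sup>2) \<le> B" "0 < B" and \<delta>: "0 < \<delta>"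
  shows "1 - \<delta> \<le> prob {\<omega> \<in> space M. - sqrt (B / \<delta>) < S \<omega>}"
proof -
  define r where "r = sqrt (B / \<delta>)"
  have r: "r > 0" "r\<^sup>2 = B / \<delta>" using B \<delta> by (auto simp: r_def)
  have "prob {\<omega> \<in> space M. r \<le> \<bar>S \<omega>\<bar>} \<le> variance S / r\<^sup>2"
    using Chebyshev_inequality[OF S _ r(1)] int mean by simp
  also have "\<dots> \<le> B / (B / \<delta>)"
    using mean B \<delta> unfolding r(2) by (intro divide_right_mono) auto
  also have "\<dots> = \<delta>" using B \<delta> by simp
  finally have "1 - \<delta> \<le> prob (space M - {\<omega> \<in> space M. r \<le> \<bar>S \<omega>\<bar>})"
    by (subst prob_compl) auto
  also have "\<dots> \<le> prob {\<omega> \<in> space M. - r < S \<omega>}"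
    by (intro finite_measure_mono) auto
  finally show ?thesis unfolding r_def .
qed

lemma (in prob_space) std_normal_moments:
  assumes Z: "distributed M lborel Z std_normal_density"
  shows "integrable M (\<lambda>\<omega>. Z \<omega> ^ k)"
    and "expectation (\<lambda>\<omega>. Z \<omega> ^ 1) = 0" "expectation (\<lambda>\<omega>. Z \<omega> ^ 2) = 1"
    and "expectation (\<lambda>\<omega>. Z \<omega> ^ 3) = 0" "expectation (\<lambda>\<omega>. Z \<omega> ^ 4) = 3"
proof -
  show "integrable M (\<lambda>\<omega>. Z \<omega> ^ k)" for k
    using distributed_integrable[OF Z, of "\<lambda>x. x ^ k"] integrable_std_normal_moment[of k] by simp
  have E: "expectation (\<lambda>\<omega>. Z \<omega> ^ k) = (\<integral>x. std_normal_density x * x ^ k \<partial>lborel)" for k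
    using distributed_integral[OF Z, of "\<lambda>x. x ^ k"] by simp
  show "expectation (\<lambda>\<omega>. Z \<omega> ^ 1) = 0" "expectation (\<lambda>\<omega>. Z \<omega> ^ 2) = 1"
    "expectation (\<lambda>\<omega>. Z \<omega> ^ 3) = 0" "expectation (\<lambda>\<omega>. Z \<omega> ^ 4) = 3"
    unfolding E using integral_std_normal_moment_odd[of 0] integral_std_normal_moment_odd[of 1]
      integral_std_normal_moment_even[of 1] integral_std_normal_moment_even[of 2]
    by (simp_all add: fact_numeral)
qed

lemma (in prob_space) normal_square_centred_moments:
  assumes X: "distributed M lborel X (normal_density m 1)"
  defines "V \<equiv> \<lambda>\<omega>. (X \<omega>)\<^sup>2 - (1 + m\<^sup>2)"
  shows "integrable M (\<lambda>\<omega>. (V \<omega>)\<^sup>2)" "expectation V = 0"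
    "expectation (\<lambda>\<omega>. (V \<omega>)\<^sup>2) = 4 * m\<^sup>2 + 2"
proof -
  define Z where "Z = (\<lambda>\<omega>. X \<omega> - m)"
  have "distributed M lborel Z std_normal_density"
    using X normal_standard_normal_convert[of 1 X m] by (simp add: Z_def)
  note int = std_normal_moments(1)[OF this] and E = std_normal_moments(2-5)[OF this]
  have V: "V = (\<lambda>\<omega>. 2 * m * Z \<omega> ^ 1 + Z \<omega> ^ 2 - 1)"
    by (auto simp: V_def Z_def power2_eq_square algebra_simps)
  have V2: "(\<lambda>\<omega>. (V \<omega>)\<^sup>2) =
      (\<lambda>\<omega>. Z \<omega> ^ 4 + 4 * m * Z \<omega> ^ 3 + (4 * m\<^sup>2 - 2) * Z \<omega> ^ 2 - 4 * m * Z \<omega> ^ 1 + 1)"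
    unfolding V by (rule ext) (simp add: power2_eq_square eval_nat_numeral algebra_simps)
  show "expectation V = 0" unfolding V using int[of 1] int[of 2] E by (simp add: prob_space)
  show "integrable M (\<lambda>\<omega>. (V \<omega>)\<^sup>2)" unfolding V2
    by (intro Bochner_Integration.integrable_add Bochner_Integration.integrable_diff
        integrable_mult_right int) auto
  show "expectation (\<lambda>\<omega>. (V \<omega>)\<^sup>2) = 4 * m\<^sup>2 + 2" unfolding V2
    using int[of 1] int[of 2] int[of 3] int[of 4] E
    by (simp add: prob_space Bochner_Integration.integral_add Bochner_Integration.integral_diff)
qed

lemma (in prob_space) thresholded_square_moments:
  assumes Z: "distributed M lborel Z std_normal_density" and a: "a \<ge> 0"
  defines "V \<equiv> \<lambda>\<omega>. thresholded_square a (Z \<omega>)"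
  shows "integrable M (\<lambda>\<omega>. (V \<omega>)\<^sup>2)" "expectation V = 0"
    "expectation (\<lambda>\<omega>. (V \<omega>)\<^sup>2) \<le> normal_tail_moment 4 a"
proof -
  define T where "T k = normal_tail_moment k a" for k
  define f where "f k z = indicator {z. \<bar>z\<bar> > a} z * (z ^ k * std_normal_density z)" for k z
  have f_int: "integrable lborel (f k)" for k
    unfolding f_def by (rule integrable_normal_tail_moment)
  have f_I: "(\<integral>z. f k z \<partial>lborel) = T k" for k
    unfolding f_def T_def normal_tail_moment_eq_integral ..
  have T0: "T 0 > 0" unfolding T_def by (rule normal_tail_moment_0_pos[OF a])
  have nu: "nu a * T 0 = T 2" using T0 by (simp add: T_def nu_eq_normal_tail_moment)
  have nu_nonneg: "nu a \<ge> 0" using nu_ge_square[OF a] by (smt (verit) zero_le_power2)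
  have f_V: "std_normal_density z * thresholded_square a z = f 2 z - nu a * f 0 z" for z
    unfolding f_def thresholded_square_def by (auto simp: algebra_simps split: split_indicator)
  have f_V2: "std_normal_density z * (thresholded_square a z)\<^sup>2
      = f 4 z - 2 * nu a * f 2 z + (nu a)\<^sup>2 * f 0 z" for z
    unfolding f_def thresholded_square_def
    by (auto simp: algebra_simps power2_eq_square eval_nat_numeral split: split_indicator)
  have "integrable lborel (\<lambda>z. std_normal_density z * (thresholded_square a z)\<^sup>2)"
    unfolding f_V2 using f_int by simp
  then show "integrable M (\<lambda>\<omega>. (V \<omega>)\<^sup>2)"
    unfolding V_def using distributed_integrable[OF Z, of "\<lambda>z. (thresholded_square a z)\<^sup>2"] by simp
  have "expectation V = (\<integral>z. std_normal_density z * thresholded_square a z \<partial>lborel)"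
    unfolding V_def using distributed_integral[OF Z, of "thresholded_square a"] by simp
  also have "\<dots> = T 2 - nu a * T 0" unfolding f_V using f_int f_I by simp
  finally show "expectation V = 0" using nu by simp
  have "expectation (\<lambda>\<omega>. (V \<omega>)\<^sup>2)
      = (\<integral>z. std_normal_density z * (thresholded_square a z)\<^sup>2 \<partial>lborel)"
    unfolding V_def using distributed_integral[OF Z, of "\<lambda>z. (thresholded_square a z)\<^sup>2"] by simp
  also have "\<dots> = T 4 - 2 * nu a * T 2 + (nu a)\<^sup>2 * T 0" unfolding f_V2 using f_int f_I by simp
  also have "\<dots> = T 4 - nu a * T 2" by (simp add: power2_eq_square algebra_simps flip: nu)
  also have "\<dots> \<le> T 4" using nu_nonneg normal_tail_moment_nonneg[of 2 a] by (simp add: T_def)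
  finally show "expectation (\<lambda>\<omega>. (V \<omega>)\<^sup>2) \<le> normal_tail_moment 4 a" by (simp add: T_def)
qed

definition centred_summand :: "real \<Rightarrow> real \<Rightarrow> real \<Rightarrow> real" where
  "centred_summand a m x = (if m \<noteq> 0 then x\<^sup>2 - (1 + m\<^sup>2) else thresholded_square a x)"

lemma borel_measurable_centred_summand [measurable]:
  "centred_summand a m \<in> borel_measurable borel"
  unfolding centred_summand_def by measurable

lemma (in prob_space) centred_summand_moments:
  assumes X: "distributed M lborel X (normal_density m 1)" and a: "0 \<le> a"
  defines "V \<equiv> \<lambda>\<omega>. centred_summand a m (X \<omega>)"
  shows "integrable M (\<lambda>\<omega>. (V \<omega>)\<^sup>2) \<and> expectation V = 0 \<and>
    expectation (\<lambda>\<omega>. (V \<omega>)\<^sup>2) \<le> normal_tail_moment 4 a + 4 * m\<^sup>2 + 2 * of_bool (m \<noteq> 0)"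
proof (cases "m = 0")
  case True
  then have "distributed M lborel X std_normal_density" using X by simp
  from thresholded_square_moments[OF this a] show ?thesis
    using True by (simp add: V_def centred_summand_def)
next
  case False
  then show ?thesis
    using normal_square_centred_moments[OF X] normal_tail_moment_nonneg[of 4 a]
    by (simp add: V_def centred_summand_def)
qed

lemma sum_thresholded_square_ge:
  fixes x m :: "nat \<Rightarrow> real"
  assumes "a\<^sup>2 \<le> nu a"
  shows "(\<Sum>j<p. (m j)\<^sup>2) - real (card {j. j < p \<and> m j \<noteq> 0}) * (nu a - 1)
      + (\<Sum>j<p. centred_summand a (m j) (x j)) \<le> (\<Sum>j<p. thresholded_square a (x j))"
proof -
  define D where "D = {j. j < p \<and> m j \<noteq> 0}"
  have drift: "(\<Sum>j<p. if m j \<noteq> 0 then (m j)\<^sup>2 - (nu a - 1) else 0)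
      = (\<Sum>j<p. (m j)\<^sup>2) - real (card D) * (nu a - 1)"
  proof -
    have "(\<Sum>j<p. if m j \<noteq> 0 then (m j)\<^sup>2 - (nu a - 1) else 0) = (\<Sum>j\<in>D. (m j)\<^sup>2 - (nu a - 1))"
      by (simp add: sum.If_cases D_def Collect_conj_eq lessThan_def Int_commute)
    also have "\<dots> = (\<Sum>j\<in>D. (m j)\<^sup>2) - real (card D) * (nu a - 1)"
      by (simp add: sum_subtractf)
    also have "(\<Sum>j\<in>D. (m j)\<^sup>2) = (\<Sum>j<p. (m j)\<^sup>2)"
      by (intro sum.mono_neutral_left) (auto simp: D_def)
    finally show ?thesis .
  qed
  have "(if m j \<noteq> 0 then (m j)\<^sup>2 - (nu a - 1) else 0) + centred_summand a (m j) (x j)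
    \<le> thresholded_square a (x j)" for j
    using thresholded_square_ge[OF assms, of "x j"] by (auto simp: centred_summand_def)
  then have "(\<Sum>j<p. if m j \<noteq> 0 then (m j)\<^sup>2 - (nu a - 1) else 0)
      + (\<Sum>j<p. centred_summand a (m j) (x j)) \<le> (\<Sum>j<p. thresholded_square a (x j))"
    by (simp add: sum_mono flip: sum.distrib)
  then show ?thesis unfolding drift D_def .
qed

lemma (in prob_space) sum_centred_summand_moments:
  fixes X :: "nat \<Rightarrow> 'a \<Rightarrow> real" and m :: "nat \<Rightarrow> real"
  assumes indep: "indep_vars (\<lambda>_. borel) X {..<p}"
    and normal: "\<And>j. j < p \<Longrightarrow> distributed M lborel (X j) (normal_density (m j) 1)"
    and a: "0 \<le> a"
  defines "S \<equiv> \<lambda>\<omega>. \<Sum>j<p. centred_summand a (m j) (X j \<omega>)"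
  shows "random_variable borel S \<and> integrable M (\<lambda>\<omega>. (S \<omega>)\<^sup>2) \<and> expectation S = 0 \<and>
    expectation (\<lambda>\<omega>. (S \<omega>)\<^sup>2) \<le> real p * normal_tail_moment 4 a + 4 * (\<Sum>j<p. (m j)\<^sup>2)
      + 2 * real (card {j. j < p \<and> m j \<noteq> 0})"
proof -
  define V where "V = (\<lambda>j \<omega>. centred_summand a (m j) (X j \<omega>))"
  have S_V: "S = (\<lambda>\<omega>. \<Sum>j<p. V j \<omega>)" by (simp add: S_def V_def)
  have indep_V: "indep_vars (\<lambda>_. borel) V {..<p}"
    unfolding V_def by (rule indep_vars_compose2[OF indep]) simp
  have V_moments: "integrable M (\<lambda>\<omega>. (V j \<omega>)\<^sup>2) \<and> expectation (V j) = 0 \<and>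
      expectation (\<lambda>\<omega>. (V j \<omega>)\<^sup>2) \<le> normal_tail_moment 4 a + 4 * (m j)\<^sup>2 + 2 * of_bool (m j \<noteq> 0)"
    if "j < p" for j
    unfolding V_def by (rule centred_summand_moments[OF normal[OF that] a])
  have V_int: "integrable M (V j)" if "j < p" for j
    using that V_moments indep_V unfolding indep_vars_def
    by (blast intro: square_integrable_imp_integrable)
  have S_moments: "integrable M (\<lambda>\<omega>. (S \<omega>)\<^sup>2) \<and>
      expectation (\<lambda>\<omega>. (S \<omega>)\<^sup>2) = (\<Sum>j<p. expectation (\<lambda>\<omega>. (V j \<omega>)\<^sup>2))"
    unfolding S_V by (rule expectation_square_sum_indep[OF _ indep_V]) (use V_moments in auto)
  have "(\<Sum>j<p. expectation (\<lambda>\<omega>. (V j \<omega>)\<^sup>2))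
      \<le> (\<Sum>j<p. normal_tail_moment 4 a + 4 * (m j)\<^sup>2 + 2 * of_bool (m j \<noteq> 0))"
    using V_moments by (intro sum_mono) auto
  also have "\<dots> = real p * normal_tail_moment 4 a + 4 * (\<Sum>j<p. (m j)\<^sup>2)
      + 2 * real (card {j. j < p \<and> m j \<noteq> 0})"
    by (simp add: sum.distrib sum_distrib_left Collect_conj_eq lessThan_def Int_commute)
  finally have "expectation (\<lambda>\<omega>. (S \<omega>)\<^sup>2) \<le> real p * normal_tail_moment 4 a
      + 4 * (\<Sum>j<p. (m j)\<^sup>2) + 2 * real (card {j. j < p \<and> m j \<noteq> 0})"
    using S_moments by simp
  moreover have "random_variable borel S"
    using indep_V unfolding S_V indep_vars_def by (auto intro: borel_measurable_sum)
  moreover have "expectation S = 0"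
    using V_int V_moments by (simp add: S_V)
  ultimately show ?thesis using S_moments by blast
qed

lemma (in prob_space) thresholded_sum_lower_bound:
  fixes X :: "nat \<Rightarrow> 'a \<Rightarrow> real" and m :: "nat \<Rightarrow> real"
  assumes indep: "indep_vars (\<lambda>_. borel) X {..<p}"
    and normal: "\<And>j. j < p \<Longrightarrow> distributed M lborel (X j) (normal_density (m j) 1)"
    and a: "0 \<le> a" and \<delta>: "0 < \<delta>" and signal: "\<exists>j<p. m j \<noteq> 0"
  defines "k \<equiv> card {j. j < p \<and> m j \<noteq> 0}" and "\<psi> \<equiv> \<Sum>j<p. (m j)\<^sup>2"
  shows "1 - \<delta> \<le> prob {\<omega> \<in> space M.
    \<psi> - real k * (nu a - 1) - sqrt ((real p * normal_tail_moment 4 a + 4 * \<psi> + 2 * real k) / \<delta>)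
      < (\<Sum>j<p. thresholded_square a (X j \<omega>))}"
proof -
  define S where "S = (\<lambda>\<omega>. \<Sum>j<p. centred_summand a (m j) (X j \<omega>))"
  define B where "B = real p * normal_tail_moment 4 a + 4 * \<psi> + 2 * real k"
  have S: "random_variable borel S" "integrable M (\<lambda>\<omega>. (S \<omega>)\<^sup>2)" "expectation S = 0"
    "expectation (\<lambda>\<omega>. (S \<omega>)\<^sup>2) \<le> B"
    using sum_centred_summand_moments[OF indep normal a] by (simp_all add: S_def B_def \<psi>_def k_def)
  have "finite {j. j < p \<and> m j \<noteq> 0}" "{j. j < p \<and> m j \<noteq> 0} \<noteq> {}"
    using signal by auto
  then have "k \<ge> 1" unfolding k_def by (simp add: Suc_le_eq card_gt_0_iff)
  then have "B > 0"
    unfolding B_def \<psi>_def using normal_tail_moment_nonneg[of 4 a]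
    by (intro add_nonneg_pos add_nonneg_nonneg) (auto intro: sum_nonneg)
  have "1 - \<delta> \<le> prob {\<omega> \<in> space M. - sqrt (B / \<delta>) < S \<omega>}"
    by (rule prob_ge_minus_sqrt_second_moment[OF S \<open>B > 0\<close> \<delta>])
  also have "\<dots> \<le> prob {\<omega> \<in> space M. \<psi> - real k * (nu a - 1) - sqrt (B / \<delta>)
      < (\<Sum>j<p. thresholded_square a (X j \<omega>))}"
  proof (rule finite_measure_mono)
    have "\<psi> - real k * (nu a - 1) + S \<omega> \<le> (\<Sum>j<p. thresholded_square a (X j \<omega>))" for \<omega>
      unfolding S_def \<psi>_def k_def by (rule sum_thresholded_square_ge[OF nu_ge_square[OF a]])
    then show "{\<omega> \<in> space M. - sqrt (B / \<delta>) < S \<omega>} \<subseteq> {\<omega> \<in> space M.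
        \<psi> - real k * (nu a - 1) - sqrt (B / \<delta>) < (\<Sum>j<p. thresholded_square a (X j \<omega>))}"
      unfolding Collect_mono_iff by (smt (verit))
    have [measurable]: "j < p \<Longrightarrow> random_variable borel (X j)" for j
      using indep unfolding indep_vars_def by auto
    show "{\<omega> \<in> space M. \<psi> - real k * (nu a - 1) - sqrt (B / \<delta>)
        < (\<Sum>j<p. thresholded_square a (X j \<omega>))} \<in> events"
      by measurable
  qed
  finally show ?thesis unfolding B_def .
qed

section \<open>The standardised CUSUM vector\<close>

definition cusum_weight :: "nat \<Rightarrow> nat \<Rightarrow> nat \<Rightarrow> real" where
  "cusum_weight t g i = (if i \<le> t - g then sqrt (real g / (real t * (real t - real g)))
                         else - sqrt ((real t - real g) / (real t * real g)))"

lemma cusum_eq_weighted_sum: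
  assumes "g \<le> t"
  shows "cusum y t g j = (\<Sum>i\<in>{1..t}. cusum_weight t g i * y i j)"
proof -
  have "{1..t} = {1..t - g} \<union> {t - g + 1..t}" using assms by auto
  then have "(\<Sum>i\<in>{1..t}. cusum_weight t g i * y i j)
      = (\<Sum>i\<in>{1..t - g}. cusum_weight t g i * y i j) + (\<Sum>i\<in>{t - g + 1..t}. cusum_weight t g i * y i j)"
    by (simp add: sum.union_disjoint)
  then show ?thesis
    by (simp add: cusum_def cusum_weight_def sum_distrib_left sum_negf)
qed

lemma cusum_weight_eq:
  assumes "1 \<le> g" "g < t"
  defines "\<alpha> \<equiv> sqrt (real g / (real t * (real t - real g)))"
  shows "cusum_weight t g i = (if i \<le> t - g then \<alpha> else - ((real t - real g) / real g * \<alpha>))"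
proof -
  have g: "0 < real g" "real g < real t" using assms by auto
  have "sqrt ((real t - real g) / (real t * real g)) = (real t - real g) / real g * \<alpha>"
  proof (rule power2_eq_imp_eq)
    have "\<alpha>\<^sup>2 = real g / (real t * (real t - real g))" using g by (simp add: \<alpha>_def)
    then have "((real t - real g) / real g * \<alpha>)\<^sup>2
        = ((real t - real g) / real g)\<^sup>2 * (real g / (real t * (real t - real g)))"
      by (simp only: power_mult_distrib)
    also have "\<dots> = (real t - real g) / (real t * real g)"
      using g by (simp add: power2_eq_square field_simps)
    finally show "(sqrt ((real t - real g) / (real t * real g)))\<^sup>2 = ((real t - real g) / real g * \<alpha>)\<^sup>2"
      using g by simp
  qed (use g in \<open>auto simp: \<alpha>_def\<close>)
  then show ?thesis by (simp add: cusum_weight_def \<alpha>_def)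
qed

lemma cusum_weight_nonzero: "1 \<le> g \<Longrightarrow> g < t \<Longrightarrow> cusum_weight t g i \<noteq> 0"
  by (simp add: cusum_weight_eq)

lemma sum_cusum_weight_square:
  assumes "1 \<le> g" "g < t"
  shows "(\<Sum>i\<in>{1..t}. (cusum_weight t g i)\<^sup>2) = 1"
proof -
  define \<alpha> where "\<alpha> = sqrt (real g / (real t * (real t - real g)))"
  define \<beta> where "\<beta> = (real t - real g) / real g"
  have g: "0 < real g" "real g < real t" using assms by auto
  have \<alpha>: "\<alpha>\<^sup>2 = real g / (real t * (real t - real g))" using g by (simp add: \<alpha>_def)
  have "{1..t} = {1..t - g} \<union> {t - g + 1..t}" using assms by auto
  then have "(\<Sum>i\<in>{1..t}. (cusum_weight t g i)\<^sup>2) = real (t - g) * \<alpha>\<^sup>2 + real g * (\<beta>\<^sup>2 * \<alpha>\<^sup>2)"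
    using assms
    by (simp add: sum.union_disjoint cusum_weight_eq[OF assms] power_mult_distrib flip: \<alpha>_def \<beta>_def)
  also have "\<dots> = 1"
  proof -
    define d where "d = real t - real g"
    have d: "0 < d" "real (t - g) = d" "real g + d = real t"
      using g assms by (auto simp: d_def of_nat_diff)
    have "real (t - g) * \<alpha>\<^sup>2 + real g * (\<beta>\<^sup>2 * \<alpha>\<^sup>2)
        = d * (real g / (real t * d)) + real g * ((d / real g)\<^sup>2 * (real g / (real t * d)))"
      unfolding \<alpha>[folded d_def] \<beta>_def[folded d_def] d(2) ..
    also have "\<dots> = (real g + d) / real t"
      using d(1) g by (simp add: power2_eq_square add_divide_distrib)
    also have "\<dots> = 1" using d(3) g by simp
    finally show ?thesis .
  qed
  finally show ?thesis .
qed

lemma sum_cusum_weight_step: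
  assumes "1 \<le> g" "g < t" "\<tau> \<le> t - g"
  shows "(\<Sum>i\<in>{1..t}. cusum_weight t g i * (if i \<le> \<tau> then u else v))
    = sqrt (real g / (real t * (real t - real g))) * real \<tau> * (u - v)"
proof -
  define \<alpha> where "\<alpha> = sqrt (real g / (real t * (real t - real g)))"
  define \<beta> where "\<beta> = (real t - real g) / real g"
  have g\<beta>: "real g * \<beta> = real t - real g" using assms by (simp add: \<beta>_def)
  have w: "cusum_weight t g i = (if i \<le> t - g then \<alpha> else - (\<beta> * \<alpha>))" for i
    using cusum_weight_eq[OF assms(1,2)] by (simp flip: \<alpha>_def \<beta>_def)
  have "{1..t - g} = {1..\<tau>} \<union> {\<tau> + 1..t - g}" using assms by auto
  then have "(\<Sum>i\<in>{1..t - g}. cusum_weight t g i * (if i \<le> \<tau> then u else v))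
      = \<alpha> * (real \<tau> * u + real (t - g - \<tau>) * v)"
    using assms by (simp add: sum.union_disjoint w algebra_simps)
  moreover have "(\<Sum>i\<in>{t - g + 1..t}. cusum_weight t g i * (if i \<le> \<tau> then u else v))
      = - (real g * \<beta>) * \<alpha> * v"
    using assms by (simp add: w)
  moreover have "{1..t} = {1..t - g} \<union> {t - g + 1..t}" using assms by auto
  ultimately have "(\<Sum>i\<in>{1..t}. cusum_weight t g i * (if i \<le> \<tau> then u else v))
      = \<alpha> * (real \<tau> * u + real (t - g - \<tau>) * v) - (real g * \<beta>) * \<alpha> * v"
    by (simp add: sum.union_disjoint)
  also have "\<dots> = \<alpha> * real \<tau> * (u - v)"
    unfolding g\<beta> using assms by (simp add: of_nat_diff algebra_simps)
  finally show ?thesis unfolding \<alpha>_def .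
qed

lemma (in prob_space) distributed_weighted_sum_indep_normal:
  assumes "finite I" "I \<noteq> {}" and indep: "indep_vars (\<lambda>_. borel) X I" and \<sigma>: "0 < \<sigma>"
    and normal: "\<And>i. i \<in> I \<Longrightarrow> distributed M lborel (X i) (normal_density (\<mu> i) \<sigma>)"
    and w: "\<And>i. i \<in> I \<Longrightarrow> w i \<noteq> 0" "(\<Sum>i\<in>I. (w i)\<^sup>2) = 1"
  shows "distributed M lborel (\<lambda>\<omega>. \<Sum>i\<in>I. w i / \<sigma> * X i \<omega>)
    (normal_density (\<Sum>i\<in>I. w i / \<sigma> * \<mu> i) 1)"
proof -
  have "indep_vars (\<lambda>_. borel) (\<lambda>i \<omega>. w i / \<sigma> * X i \<omega>) I"
    by (rule indep_vars_compose2[OF indep, where Y = "\<lambda>i x. w i / \<sigma> * x"]) simp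
  moreover have "distributed M lborel (\<lambda>\<omega>. w i / \<sigma> * X i \<omega>)
      (normal_density (w i / \<sigma> * \<mu> i) (\<bar>w i / \<sigma>\<bar> * \<sigma>))" if "i \<in> I" for i
    using normal_density_affine[OF normal[OF that] \<sigma>, of "w i / \<sigma>" 0] w(1)[OF that] \<sigma> by simp
  ultimately have "distributed M lborel (\<lambda>\<omega>. \<Sum>i\<in>I. w i / \<sigma> * X i \<omega>)
      (normal_density (\<Sum>i\<in>I. w i / \<sigma> * \<mu> i) (sqrt (\<Sum>i\<in>I. (\<bar>w i / \<sigma>\<bar> * \<sigma>)\<^sup>2)))"
    using assms by (intro sum_indep_normal) auto
  moreover have "(\<Sum>i\<in>I. (\<bar>w i / \<sigma>\<bar> * \<sigma>)\<^sup>2) = 1"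
    using \<sigma> w(2) by (simp add: power_mult_distrib power_divide)
  ultimately show ?thesis by simp
qed

lemma (in prob_space) distributed_cusum:
  fixes Y :: "nat \<Rightarrow> 'a \<Rightarrow> nat \<Rightarrow> real"
  assumes \<sigma>: "\<sigma> > 0"
    and indep: "indep_vars (\<lambda>_. borel) (\<lambda>(i, j) \<omega>. Y i \<omega> j) ({1..} \<times> {..<p})"
    and normal: "\<forall>i\<ge>1. \<forall>j<p. distributed M lborel (\<lambda>\<omega>. Y i \<omega> j)
      (normal_density (if i \<le> \<tau> then \<mu>1 j else \<mu>2 j) \<sigma>)"
    and g: "1 \<le> g" "g < t" and \<tau>: "\<tau> \<le> t - g" and j: "j < p"
  shows "distributed M lborel (\<lambda>\<omega>. cusum (\<lambda>i j. Y i \<omega> j) t g j / \<sigma>)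
    (normal_density (sqrt (real g / (real t * (real t - real g))) * real \<tau> * (\<mu>1 j - \<mu>2 j) / \<sigma>) 1)"
proof -
  define I where "I = {1..t} \<times> {j}"
  have sum_I: "(\<Sum>ij\<in>I. h ij) = (\<Sum>i\<in>{1..t}. h (i, j))" for h :: "nat \<times> nat \<Rightarrow> real"
  proof -
    have "I = (\<lambda>i. (i, j)) ` {1..t}" by (auto simp: I_def)
    then show ?thesis by (simp add: sum.reindex inj_on_def)
  qed
  have "indep_vars (\<lambda>_. borel) (\<lambda>(i, j) \<omega>. Y i \<omega> j) I"
    by (rule indep_vars_subset[OF indep]) (use j in \<open>auto simp: I_def\<close>)
  moreover have "(\<Sum>ij\<in>I. (cusum_weight t g (fst ij))\<^sup>2) = 1"
    using sum_cusum_weight_square[OF g] by (simp add: sum_I)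
  ultimately have "distributed M lborel
      (\<lambda>\<omega>. \<Sum>ij\<in>I. cusum_weight t g (fst ij) / \<sigma> * (case ij of (i, j) \<Rightarrow> \<lambda>\<omega>. Y i \<omega> j) \<omega>)
      (normal_density (\<Sum>ij\<in>I. cusum_weight t g (fst ij) / \<sigma> *
        (case ij of (i, j) \<Rightarrow> if i \<le> \<tau> then \<mu>1 j else \<mu>2 j)) 1)"
    using normal j g
    by (intro distributed_weighted_sum_indep_normal[OF _ _ _ \<sigma>]) (auto simp: I_def cusum_weight_nonzero)
  then show ?thesis
    using sum_cusum_weight_step[OF g \<tau>, of "\<mu>1 j" "\<mu>2 j"] g
    by (simp add: sum_I cusum_eq_weighted_sum ac_simps flip: sum_divide_distrib)
qed

lemma (in prob_space) indep_vars_cusum: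
  fixes Y :: "nat \<Rightarrow> 'a \<Rightarrow> nat \<Rightarrow> real"
  assumes indep: "indep_vars (\<lambda>_. borel) (\<lambda>(i, j) \<omega>. Y i \<omega> j) ({1..} \<times> {..<p})"
  shows "indep_vars (\<lambda>_. borel) (\<lambda>j \<omega>. cusum (\<lambda>i j. Y i \<omega> j) t g j / \<sigma>) {..<p}"
proof -
  define K where "K j = {1..t} \<times> {j}" for j :: nat
  define F where "F j f = (sqrt (real g / (real t * (real t - real g))) * (\<Sum>i=1..t-g. f (i, j))
      - sqrt ((real t - real g) / (real t * real g)) * (\<Sum>i=t-g+1..t. f (i, j))) / \<sigma>"
    for j and f :: "nat \<times> nat \<Rightarrow> real"
  have "indep_vars (\<lambda>j. PiM (K j) (\<lambda>_. borel))
      (\<lambda>j \<omega>. restrict (\<lambda>ij. (\<lambda>(i, j) \<omega>. Y i \<omega> j) ij \<omega>) (K j)) {..<p}"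
    by (rule indep_vars_restrict[OF indep]) (auto simp: K_def disjoint_family_on_def)
  moreover have "F j \<in> borel_measurable (PiM (K j) (\<lambda>_. borel))" for j
    unfolding F_def by measurable (auto simp: K_def)
  ultimately have "indep_vars (\<lambda>_. borel) (\<lambda>j \<omega>. F j (restrict (\<lambda>ij. (\<lambda>(i, j) \<omega>. Y i \<omega> j) ij \<omega>) (K j))) {..<p}"
    by (rule indep_vars_compose2)
  moreover have "F j (restrict (\<lambda>ij. (\<lambda>(i, j) \<omega>. Y i \<omega> j) ij \<omega>) (K j)) = cusum (\<lambda>i j. Y i \<omega> j) t g j / \<sigma>" for j \<omega>
  proof -
    have "(\<Sum>i=1..t-g. restrict (\<lambda>ij. (\<lambda>(i, j) \<omega>. Y i \<omega> j) ij \<omega>) (K j) (i, j)) = (\<Sum>i=1..t-g. Y i \<omega> j)"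
      "(\<Sum>i=t-g+1..t. restrict (\<lambda>ij. (\<lambda>(i, j) \<omega>. Y i \<omega> j) ij \<omega>) (K j) (i, j)) = (\<Sum>i=t-g+1..t. Y i \<omega> j)"
      by (auto simp: K_def intro!: sum.cong)
    then show ?thesis by (simp add: F_def cusum_def)
  qed
  ultimately show ?thesis by simp
qed

section \<open>Size of the threshold and of the error terms\<close>

lemma ln_ge_half:
  assumes "2 \<le> x"
  shows "1 / 2 \<le> ln (x :: real)"
proof -
  have "- ln x \<le> 1 / x - 1" using ln_le_minus_one[of "1 / x"] assms by (simp add: ln_div)
  moreover have "1 / x \<le> 1 / 2" using assms by simp
  ultimately show ?thesis by linarith
qed

lemma square_mult_exp_minus_le: "0 \<le> L \<Longrightarrow> L\<^sup>2 * exp (- L) \<le> (4 :: real)"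
proof -
  assume L: "0 \<le> L"
  have "L / 2 \<le> exp (L / 2)" using exp_ge_add_one_self[of "L / 2"] by linarith
  then have "(L / 2)\<^sup>2 \<le> (exp (L / 2))\<^sup>2" using L by (intro power_mono) auto
  also have "(exp (L / 2))\<^sup>2 = exp L" by (simp add: power2_eq_square flip: exp_add)
  finally show ?thesis by (simp add: exp_minus field_simps power_divide)
qed

definition sparsity_log :: "nat \<Rightarrow> nat \<Rightarrow> nat \<Rightarrow> real" where
  "sparsity_log p t s = ln (exp 1 * real p * ln (real t) / (real s)\<^sup>2)"

lemma sparsity_log_ge_1:
  assumes "1 \<le> s" "real s \<le> sqrt (real p * ln (real t))"
  shows "1 \<le> sparsity_log p t s"
proof -
  have "(real s)\<^sup>2 \<le> real p * ln (real t)"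
    using sqrt_ge_absD[of "real s"] assms(2) by simp
  then have "exp 1 \<le> exp 1 * real p * ln (real t) / (real s)\<^sup>2"
    using assms(1) by (simp add: le_divide_eq)
  then show ?thesis
    unfolding sparsity_log_def by (subst ln_ge_iff) (auto intro: less_le_trans[OF exp_gt_zero])
qed

lemma thr_sparse:
  assumes "1 \<le> s" "real s \<le> sqrt (real p * ln (real t))"
  shows "(thr p s t)\<^sup>2 = 4 * sparsity_log p t s" "2 \<le> thr p s t"
proof -
  have L: "1 \<le> sparsity_log p t s" by (rule sparsity_log_ge_1[OF assms])
  have sq_eq: "thr_sq p s t = 4 * sparsity_log p t s"
    using assms by (simp add: thr_sq_def sparsity_log_def power_int_minus divide_inverse ac_simps)
  moreover have nonneg: "0 \<le> thr_sq p s t" using sq_eq L by simp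
  ultimately show sq: "(thr p s t)\<^sup>2 = 4 * sparsity_log p t s" by (simp add: thr_def)
  have "2\<^sup>2 \<le> (thr p s t)\<^sup>2" using sq L by simp
  then show "2 \<le> thr p s t" by (rule power2_le_imp_le) (simp add: thr_def nonneg)
qed

lemma zfun_sparse:
  "real s \<le> sqrt (real p * ln (real t)) \<Longrightarrow>
    zfun s p t = max (real s * sparsity_log p t s) (ln (real t))"
  by (simp add: zfun_def sparsity_log_def mult.assoc)

lemma sparsity_log_halving:
  assumes s: "1 \<le> s" "real k / 2 \<le> real s" "s \<le> k"
    and k: "real k \<le> sqrt (real p * ln (real t))"
  shows "sparsity_log p t s \<le> sparsity_log p t k + 2"
    "real s * sparsity_log p t s \<le> 2 * (real k * sparsity_log p t k)"
proof -
  have k2: "0 < (real k)\<^sup>2" "(real k)\<^sup>2 \<le> real p * ln (real t)"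
    using s k sqrt_ge_absD[of "real k"] by auto
  then have "0 < real p * ln (real t)" by linarith
  define X where "X = exp 1 * real p * ln (real t) / (real k)\<^sup>2"
  have "0 < X" unfolding X_def
    using k2(1) \<open>0 < real p * ln (real t)\<close> by (metis divide_pos_pos exp_gt_zero mult.assoc mult_pos_pos)
  have "sparsity_log p t s = ln (X * (real k / real s)\<^sup>2)"
    unfolding sparsity_log_def X_def using s by (simp add: field_simps power2_eq_square)
  also have "\<dots> = ln X + 2 * ln (real k / real s)"
    using \<open>0 < X\<close> s by (simp add: ln_mult ln_realpow)
  also have "ln X = sparsity_log p t k" by (simp add: X_def sparsity_log_def)
  finally have eq: "sparsity_log p t s = sparsity_log p t k + 2 * ln (real k / real s)" .
  have ln_le: "ln (real k / real s) \<le> real k / real s - 1"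
    using s by (intro ln_le_minus_one) simp
  moreover have "real k / real s \<le> 2" using s by (simp add: divide_le_eq)
  ultimately show "sparsity_log p t s \<le> sparsity_log p t k + 2" using eq by simp
  have Lk: "1 \<le> sparsity_log p t k" using s k by (intro sparsity_log_ge_1) auto
  have "real s * ln (real k / real s) \<le> real s * (real k / real s - 1)"
    using ln_le s by (intro mult_left_mono) auto
  also have "\<dots> = real k - real s" using s by (simp add: field_simps)
  finally have "real s * sparsity_log p t s \<le> real s * sparsity_log p t k + 2 * (real k - real s)"
    using eq by (simp add: algebra_simps)
  also have "\<dots> \<le> real k * sparsity_log p t k + real k"
  proof -
    have "real s * sparsity_log p t k \<le> real k * sparsity_log p t k"
      using s Lk by (intro mult_right_mono) auto
    then show ?thesis using s by simp
  qed
  also have "\<dots> \<le> 2 * (real k * sparsity_log p t k)"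
    using Lk mult_left_mono[of 1 "sparsity_log p t k" "real k"] by simp
  finally show "real s * sparsity_log p t s \<le> 2 * (real k * sparsity_log p t k)" .
qed

lemma normal_tail_moment_4_thr_le:
  assumes t: "2 \<le> t" and s: "1 \<le> s" "real s \<le> sqrt (real p * ln (real t))"
  shows "real p * normal_tail_moment 4 (thr p s t) \<le> 160 * (real s)\<^sup>2"
proof -
  define a where "a = thr p s t"
  define L where "L = sparsity_log p t s"
  have a: "a\<^sup>2 = 4 * L" "2 \<le> a" unfolding a_def L_def by (rule thr_sparse[OF s])+
  have L: "1 \<le> L" unfolding L_def by (rule sparsity_log_ge_1[OF s])
  have lnt: "1 / 2 \<le> ln (real t)" using t by (intro ln_ge_half) simp
  have "0 < (real s)\<^sup>2" "(real s)\<^sup>2 \<le> real p * ln (real t)"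
    using s sqrt_ge_absD[of "real s"] by auto
  then have p: "0 < real p" by (cases "p = 0") auto
  have "a ^ 3 * 2 \<le> a ^ 3 * a" using a by (intro mult_left_mono) auto
  also have "a ^ 3 * a = (a\<^sup>2)\<^sup>2" by (simp add: eval_nat_numeral)
  finally have a3: "a ^ 3 \<le> 8 * L\<^sup>2" using a by (simp add: power_mult_distrib)
  have kernel: "gauss_kernel a = exp (- L) * exp (- L)"
    unfolding gauss_kernel_def using a by (simp flip: exp_add)
  have "real p * exp (- L) = (real s)\<^sup>2 / (exp 1 * ln (real t))"
    using p lnt s by (simp add: L_def sparsity_log_def exp_minus field_simps)
  also have "\<dots> \<le> (real s)\<^sup>2"
  proof -
    have "2 * (1 / 2) \<le> exp 1 * ln (real t)"
      using exp_ge_add_one_self[of 1] lnt by (intro mult_mono) auto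
    then show ?thesis using lnt by (simp add: divide_le_eq mult_le_cancel_left1)
  qed
  finally have p_exp: "real p * exp (- L) \<le> (real s)\<^sup>2" .
  have "real p * normal_tail_moment 4 a \<le> real p * (5 * (8 * L\<^sup>2) * gauss_kernel a)"
  proof -
    have "normal_tail_moment 4 a \<le> 5 * a ^ 3 * gauss_kernel a"
      by (rule normal_tail_moment_4_le[OF a(2)])
    also have "\<dots> \<le> 5 * (8 * L\<^sup>2) * gauss_kernel a"
      using a3 gauss_kernel_pos[of a] by (intro mult_right_mono) auto
    finally show ?thesis using p by (intro mult_left_mono) auto
  qed
  also have "\<dots> = 40 * (L\<^sup>2 * exp (- L)) * (real p * exp (- L))" unfolding kernel by simp
  also have "\<dots> \<le> 40 * 4 * (real s)\<^sup>2"
    using square_mult_exp_minus_le[of L] L p_exp by (intro mult_mono) auto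
  finally show ?thesis unfolding a_def by simp
qed

lemma threshold_bounds_sparse:
  assumes t: "2 \<le> t" and s: "1 \<le> s" "real k / 2 \<le> real s" "s \<le> k"
    and k: "real k \<le> sqrt (real p * ln (real t))"
  shows "0 \<le> thr p s t" "0 \<le> zfun k p t" "zfun s p t \<le> 2 * zfun k p t"
    "real k * (nu (thr p s t) - 1) \<le> 324 * zfun k p t"
    "real p * normal_tail_moment 4 (thr p s t) + 2 * real k \<le> 162 * (zfun k p t)\<^sup>2"
proof -
  have s_le: "real s \<le> sqrt (real p * ln (real t))" using s k by linarith
  have k1: "1 \<le> k" using s by simp
  have Lk: "1 \<le> sparsity_log p t k" using sparsity_log_ge_1[OF k1 k] .
  note halving = sparsity_log_halving[OF s k]
  have zk: "real k * sparsity_log p t k \<le> zfun k p t"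
    using zfun_sparse[OF k] by simp
  show "0 \<le> thr p s t" using thr_sparse(2)[OF s(1) s_le] by simp
  have zk_ge: "real k \<le> zfun k p t"
    using zk Lk mult_left_mono[of 1 "sparsity_log p t k" "real k"] by simp
  then show "0 \<le> zfun k p t" using of_nat_0_le_iff[of k] by linarith
  show "zfun s p t \<le> 2 * zfun k p t"
    using zfun_sparse[OF s_le] zfun_sparse[OF k] halving(2) ln_ge_half[of "real t"] t by auto
  have "nu (thr p s t) - 1 \<le> 27 * (4 * sparsity_log p t s)"
    using nu_le[OF thr_sparse(2)[OF s(1) s_le]] thr_sparse(1)[OF s(1) s_le] by simp
  also have "\<dots> \<le> 324 * sparsity_log p t k" using halving(1) Lk by simp
  finally have "real k * (nu (thr p s t) - 1) \<le> real k * (324 * sparsity_log p t k)"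
    by (intro mult_left_mono) auto
  then show "real k * (nu (thr p s t) - 1) \<le> 324 * zfun k p t" using zk by simp
  have "real p * normal_tail_moment 4 (thr p s t) \<le> 160 * (real s)\<^sup>2"
    by (rule normal_tail_moment_4_thr_le[OF t s(1) s_le])
  also have "\<dots> \<le> 160 * (real k)\<^sup>2" using s by (simp add: power_mono)
  finally have "real p * normal_tail_moment 4 (thr p s t) \<le> 160 * (real k)\<^sup>2" .
  moreover have "2 * real k \<le> 2 * (real k)\<^sup>2" using k1 by (simp add: power2_eq_square)
  moreover have "(real k)\<^sup>2 \<le> (zfun k p t)\<^sup>2" using zk_ge by (intro power_mono) auto
  ultimately show "real p * normal_tail_moment 4 (thr p s t) + 2 * real k \<le> 162 * (zfun k p t)\<^sup>2"
    by linarith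
qed

lemma threshold_bounds_dense:
  assumes t: "2 \<le> t" and k: "1 \<le> k" "k \<le> p" "sqrt (real p * ln (real t)) \<le> real k"
    and p: "sqrt (real p * ln (real t)) < real p"
  shows "0 \<le> thr p p t" "0 \<le> zfun k p t" "zfun p p t \<le> 2 * zfun k p t"
    "real k * (nu (thr p p t) - 1) \<le> 324 * zfun k p t"
    "real p * normal_tail_moment 4 (thr p p t) + 2 * real k \<le> 162 * (zfun k p t)\<^sup>2"
proof -
  define N where "N = real p * ln (real t)"
  have "1 / 2 \<le> ln (real t)" using t by (intro ln_ge_half) simp
  then have "real p * (1 / 2) \<le> N" unfolding N_def by (intro mult_left_mono) auto
  then have N: "0 < N" "real p \<le> 2 * N" using k by linarith+
  have thr: "thr p p t = 0" using p by (simp add: thr_def thr_sq_def)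
  then show "0 \<le> thr p p t" by simp
  have zk: "sqrt N \<le> zfun k p t"
  proof (cases "sqrt N < real k")
    case True
    then show ?thesis by (simp add: zfun_def N_def)
  next
    case False
    then have "real k = sqrt N" using k by (simp add: N_def)
    then have "(real k)\<^sup>2 = N" using N by simp
    then have "exp 1 * real p * ln (real t) / (real k)\<^sup>2 = exp 1 * N / N"
      by (simp add: N_def mult.assoc)
    also have "\<dots> = exp 1" using N by simp
    finally have ratio: "exp 1 * real p * ln (real t) / (real k)\<^sup>2 = exp 1" .
    have "zfun k p t = max (real k) (ln (real t))"
      using False unfolding zfun_def ratio by (simp add: N_def)
    then show ?thesis using \<open>real k = sqrt N\<close> by simp
  qed
  have "0 \<le> sqrt N" using N by simp
  then show zk0: "0 \<le> zfun k p t" using zk by linarith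
  have "zfun p p t = sqrt N" using p by (simp add: zfun_def N_def)
  then show "zfun p p t \<le> 2 * zfun k p t" using zk \<open>0 \<le> sqrt N\<close> by linarith
  show "real k * (nu (thr p p t) - 1) \<le> 324 * zfun k p t" using thr zk0 by (simp add: nu_0)
  have "N \<le> (zfun k p t)\<^sup>2"
    using zk power_mono[of "sqrt N" "zfun k p t" 2] N by simp
  moreover have "real k \<le> real p" using k by simp
  ultimately show "real p * normal_tail_moment 4 (thr p p t) + 2 * real k \<le> 162 * (zfun k p t)\<^sup>2"
    using N by (simp add: thr normal_tail_moment_4_at_0)
qed

lemma threshold_bounds:
  assumes t: "2 \<le> t" and k: "1 \<le> k" "k \<le> p"
    and sparse: "real k < sqrt (real p * ln (real t)) \<Longrightarrow> real k / 2 \<le> real s \<and> s \<le> k"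
    and dense: "sqrt (real p * ln (real t)) \<le> real k \<Longrightarrow> s = p"
  shows "0 \<le> thr p s t \<and> 0 \<le> zfun k p t \<and> zfun s p t \<le> 2 * zfun k p t \<and>
    real k * (nu (thr p s t) - 1) \<le> 324 * zfun k p t \<and>
    real p * normal_tail_moment 4 (thr p s t) + 2 * real k \<le> 162 * (zfun k p t)\<^sup>2"
proof -
  define N where "N = real p * ln (real t)"
  consider "1 \<le> s" "real k / 2 \<le> real s" "s \<le> k" "real k \<le> sqrt N"
    | "sqrt N \<le> real k" "sqrt N < real p" "s = p"
  proof (cases "real k < sqrt N")
    case True
    then show ?thesis using sparse k by (intro that(1)) (auto simp: N_def)
  next
    case False
    then have "s = p" using dense by (auto simp: N_def)
    show ?thesis
    proof (cases "sqrt N < real p")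
      case True
      then show ?thesis using False \<open>s = p\<close> by (intro that(2)) auto
    next
      case p_le: False
      then have "s = k" "real k = sqrt N" using False \<open>s = p\<close> k by auto
      moreover have "1 \<le> s" "real k / 2 \<le> real s" "s \<le> k" using \<open>s = k\<close> k by auto
      ultimately show ?thesis by (intro that(1)) linarith+
    qed
  qed
  then show ?thesis
  proof cases
    case 1
    then show ?thesis using threshold_bounds_sparse[OF t, of s k p] by (simp add: N_def)
  next
    case 2
    then show ?thesis using threshold_bounds_dense[OF t k] by (simp add: N_def)
  qed
qed

lemma Sgrid_choice:
  assumes k: "1 \<le> k" "k \<le> p"
  obtains s where "s \<in> Sgrid p t"
    "real k < sqrt (real p * ln (real t)) \<Longrightarrow> real k / 2 \<le> real s \<and> s \<le> k"
    "sqrt (real p * ln (real t)) \<le> real k \<Longrightarrow> s = p"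
proof (cases "real k < sqrt (real p * ln (real t))")
  case True
  obtain i where i: "2 ^ i \<le> k" "k < 2 ^ (i + 1)" using ex_power_ivl1[of 2 k] k by auto
  have "real i \<le> log 2 (real k)"
    by (rule le_log_of_power) (use i in \<open>auto simp flip: of_nat_power\<close>)
  also have "\<dots> \<le> log 2 (min (sqrt (real p * ln (real t))) (real p))"
    using True k by (intro log_mono) auto
  finally have "2 ^ i \<in> Sgrid p t" unfolding Sgrid_def by (auto simp: le_floor_iff)
  moreover have "real k / 2 \<le> real (2 ^ i)"
  proof -
    have "k \<le> 2 * 2 ^ i" using i(2) by simp
    then have "real k \<le> real (2 * 2 ^ i)" by (simp only: of_nat_le_iff)
    then show ?thesis by simp
  qed
  ultimately show ?thesis using True i(1) by (intro that[of "2 ^ i"]) auto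
next
  case False
  then show ?thesis by (intro that[of p]) (auto simp: Sgrid_def)
qed

lemma error_terms_le:
  fixes zs zk K P \<psi> \<delta> lam :: real
  assumes zk: "0 \<le> zk" "zs \<le> 2 * zk" and K: "K \<le> 324 * zk" and P: "P \<le> 162 * zk\<^sup>2"
    and \<psi>: "0 \<le> \<psi>" and \<delta>: "0 < \<delta>" "\<delta> < 1" and lam: "0 < lam"
  shows "lam * zs + K + sqrt ((P + 4 * \<psi>) / \<delta>)
    \<le> (337 / sqrt \<delta> + 2 * lam) * zk + 337 / sqrt \<delta> * sqrt \<psi>"
proof -
  define q where "q = sqrt \<psi>"
  define r where "r = sqrt \<delta>"
  have q: "0 \<le> q" "q\<^sup>2 = \<psi>" using \<psi> by (auto simp: q_def)
  have r: "0 < r" "r \<le> 1" using \<delta> by (auto simp: r_def)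
  have "(13 * zk + 2 * q)\<^sup>2 = 169 * zk\<^sup>2 + 52 * (zk * q) + 4 * q\<^sup>2"
    by (simp add: power2_eq_square algebra_simps)
  moreover have "0 \<le> zk * q" "0 \<le> zk\<^sup>2" using zk q by simp_all
  ultimately have "P + 4 * \<psi> \<le> (13 * zk + 2 * q)\<^sup>2" using P q by linarith
  then have "sqrt (P + 4 * \<psi>) \<le> 13 * zk + 2 * q"
    using zk q by (intro real_le_lsqrt) auto
  then have "sqrt ((P + 4 * \<psi>) / \<delta>) \<le> (13 * zk + 2 * q) / r"
    using r by (simp add: r_def real_sqrt_divide divide_right_mono)
  moreover have "K \<le> 324 * zk / r"
  proof -
    have "324 * zk \<le> 324 * zk / r" using zk r by (simp add: le_divide_eq mult_left_le)
    then show ?thesis using K by linarith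
  qed
  moreover have "lam * zs \<le> 2 * lam * zk" using zk lam by (simp add: mult_left_mono)
  ultimately have "lam * zs + K + sqrt ((P + 4 * \<psi>) / \<delta>) \<le> 2 * lam * zk + (337 * zk + 2 * q) / r"
    by (simp add: add_divide_distrib)
  also have "\<dots> \<le> (337 / r + 2 * lam) * zk + 337 / r * q"
    using zk q r by (simp add: field_simps)
  finally show ?thesis unfolding q_def r_def .
qed

lemma Astat_eq_sum_thresholded_square:
  assumes "\<sigma> > 0"
  shows "Astat p \<sigma> y t s g = (\<Sum>j<p. thresholded_square (thr p s t) (cusum y t g j / \<sigma>))"
  using assms by (simp add: Astat_def thresholded_square_def power_divide)

lemma cusum_shift_sum_square:
  assumes "g < t"
  shows "real g * (real \<tau>)\<^sup>2 / (real t * (real t - real g)) * (sqrt (\<Sum>j<p. (\<mu>1 j - \<mu>2 j)\<^sup>2))\<^sup>2 / \<sigma>\<^sup>2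
    = (\<Sum>j<p. (sqrt (real g / (real t * (real t - real g))) * real \<tau> * (\<mu>1 j - \<mu>2 j) / \<sigma>)\<^sup>2)"
  using assms by (simp add: power_mult_distrib power_divide sum_nonneg sum_divide_distrib
      sum_distrib_left mult.assoc)

section \<open>The lower bound for the statistic\<close>

lemma (in prob_space) thresholded_sum_lower_bound_zfun:
  fixes X :: "nat \<Rightarrow> 'a \<Rightarrow> real" and m :: "nat \<Rightarrow> real" and p :: nat
  defines "k \<equiv> card {j. j < p \<and> m j \<noteq> 0}" and "\<psi> \<equiv> \<Sum>j<p. (m j)\<^sup>2"
  assumes indep: "indep_vars (\<lambda>_. borel) X {..<p}"
    and normal: "\<And>j. j < p \<Longrightarrow> distributed M lborel (X j) (normal_density (m j) 1)"
    and t: "2 \<le> t" and k: "1 \<le> k"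
    and sparse: "real k < sqrt (real p * ln (real t)) \<Longrightarrow> real k / 2 \<le> real s \<and> s \<le> k"
    and dense: "sqrt (real p * ln (real t)) \<le> real k \<Longrightarrow> s = p"
    and \<delta>: "0 < \<delta>" "\<delta> < 1" and lam: "0 < lam"
  shows "1 - \<delta> \<le> prob {\<omega> \<in> space M.
    \<psi> - (337 / sqrt \<delta> + 2 * lam) * zfun k p t - 337 / sqrt \<delta> * sqrt \<psi>
      \<le> (\<Sum>j<p. thresholded_square (thr p s t) (X j \<omega>)) - lam * zfun s p t}"
proof -
  define a where "a = thr p s t"
  have "k \<le> p" unfolding k_def by (rule order_trans[OF card_mono[of "{..<p}"]]) auto
  note bounds = threshold_bounds[OF t k this sparse dense, folded a_def]
  have "{j. j < p \<and> m j \<noteq> 0} \<noteq> {}" using k by (intro notI) (simp add: k_def)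
  then have "\<exists>j<p. m j \<noteq> 0" by blast
  have "1 - \<delta> \<le> prob {\<omega> \<in> space M.
      \<psi> - real k * (nu a - 1) - sqrt ((real p * normal_tail_moment 4 a + 4 * \<psi> + 2 * real k) / \<delta>)
        < (\<Sum>j<p. thresholded_square a (X j \<omega>))}"
    unfolding k_def \<psi>_def
    by (rule thresholded_sum_lower_bound[OF indep normal conjunct1[OF bounds] \<delta>(1) \<open>\<exists>j<p. m j \<noteq> 0\<close>])
  also have "\<dots> \<le> prob {\<omega> \<in> space M.
      \<psi> - (337 / sqrt \<delta> + 2 * lam) * zfun k p t - 337 / sqrt \<delta> * sqrt \<psi>
        \<le> (\<Sum>j<p. thresholded_square a (X j \<omega>)) - lam * zfun s p t}"
  proof (rule finite_measure_mono)
    have "lam * zfun s p t + real k * (nu a - 1)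
        + sqrt ((real p * normal_tail_moment 4 a + 2 * real k + 4 * \<psi>) / \<delta>)
      \<le> (337 / sqrt \<delta> + 2 * lam) * zfun k p t + 337 / sqrt \<delta> * sqrt \<psi>"
      using bounds \<delta> lam by (intro error_terms_le) (auto simp: \<psi>_def intro: sum_nonneg)
    then show "{\<omega> \<in> space M. \<psi> - real k * (nu a - 1)
        - sqrt ((real p * normal_tail_moment 4 a + 4 * \<psi> + 2 * real k) / \<delta>)
          < (\<Sum>j<p. thresholded_square a (X j \<omega>))}
      \<subseteq> {\<omega> \<in> space M. \<psi> - (337 / sqrt \<delta> + 2 * lam) * zfun k p t - 337 / sqrt \<delta> * sqrt \<psi>
          \<le> (\<Sum>j<p. thresholded_square a (X j \<omega>)) - lam * zfun s p t}"
      unfolding Collect_mono_iff by (smt (verit))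
    have [measurable]: "j < p \<Longrightarrow> random_variable borel (X j)" for j
      using indep unfolding indep_vars_def by auto
    show "{\<omega> \<in> space M. \<psi> - (337 / sqrt \<delta> + 2 * lam) * zfun k p t - 337 / sqrt \<delta> * sqrt \<psi>
        \<le> (\<Sum>j<p. thresholded_square a (X j \<omega>)) - lam * zfun s p t} \<in> events"
      by measurable
  qed
  finally show ?thesis unfolding a_def .
qed

lemma (in prob_space) Astat_lower_bound:
  fixes Y :: "nat \<Rightarrow> 'a \<Rightarrow> nat \<Rightarrow> real" and \<mu>1 \<mu>2 :: "nat \<Rightarrow> real"
    and p \<tau> t g :: nat and \<sigma> :: real
  defines "k \<equiv> card {j. j < p \<and> \<mu>1 j \<noteq> \<mu>2 j}"
    and "\<psi> \<equiv> real g * (real \<tau>)\<^sup>2 / (real t * (real t - real g))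
      * (sqrt (\<Sum>j<p. (\<mu>1 j - \<mu>2 j)\<^sup>2))\<^sup>2 / \<sigma>\<^sup>2"
  assumes \<sigma>: "\<sigma> > 0"
    and indep: "indep_vars (\<lambda>_. borel) (\<lambda>(i, j) \<omega>. Y i \<omega> j) ({1..} \<times> {..<p})"
    and normal: "\<forall>i\<ge>1. \<forall>j<p. distributed M lborel (\<lambda>\<omega>. Y i \<omega> j)
      (normal_density (if i \<le> \<tau> then \<mu>1 j else \<mu>2 j) \<sigma>)"
    and k: "1 \<le> k" and \<tau>: "1 \<le> \<tau>" "\<tau> < t" and g: "1 \<le> g" "g \<le> t - \<tau>"
    and sparse: "real k < sqrt (real p * ln (real t)) \<Longrightarrow> real k / 2 \<le> real s \<and> s \<le> k"
    and dense: "sqrt (real p * ln (real t)) \<le> real k \<Longrightarrow> s = p"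
    and \<delta>: "0 < \<delta>" "\<delta> < 1" and lam: "0 < lam"
  shows "1 - \<delta> \<le> prob {\<omega> \<in> space M.
    \<psi> - (337 / sqrt \<delta> + 2 * lam) * zfun k p t - 337 / sqrt \<delta> * sqrt \<psi>
      \<le> Astat p \<sigma> (\<lambda>i j. Y i \<omega> j) t s g - lam * zfun s p t}"
proof -
  have t: "2 \<le> t" and g': "1 \<le> g" "g < t" and \<tau>': "\<tau> \<le> t - g" using \<tau> g by auto
  define c where "c = sqrt (real g / (real t * (real t - real g))) * real \<tau>"
  define m where "m j = c * (\<mu>1 j - \<mu>2 j) / \<sigma>" for j
  define X where "X j \<omega> = cusum (\<lambda>i j. Y i \<omega> j) t g j / \<sigma>" for j \<omega>
  have "c > 0" using \<tau> g' by (simp add: c_def)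
  then have k_eq: "k = card {j. j < p \<and> m j \<noteq> 0}" using \<sigma> by (simp add: k_def m_def)
  have \<psi>_eq: "\<psi> = (\<Sum>j<p. (m j)\<^sup>2)"
    unfolding \<psi>_def m_def c_def by (rule cusum_shift_sum_square[OF g'(2)])
  have X_indep: "indep_vars (\<lambda>_. borel) X {..<p}"
    unfolding X_def[abs_def] by (rule indep_vars_cusum[OF indep])
  have X_normal: "distributed M lborel (X j) (normal_density (m j) 1)" if "j < p" for j
    unfolding X_def[abs_def] m_def c_def by (rule distributed_cusum[OF \<sigma> indep normal g' \<tau>' that])
  show ?thesis
    unfolding Astat_eq_sum_thresholded_square[OF \<sigma>] \<psi>_eq k_eq
    using thresholded_sum_lower_bound_zfun[OF X_indep X_normal t k[unfolded k_eq]
        sparse[unfolded k_eq] dense[unfolded k_eq] \<delta> lam]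
    by (simp add: X_def)
qed

theorem lemma4:
  shows "\<exists>Cf :: real \<Rightarrow> real. (\<forall>\<delta>. 0 < \<delta> \<and> \<delta> < 1 \<longrightarrow> Cf \<delta> > 0) \<and>
   (\<forall>(M :: 'a measure) (Y :: nat \<Rightarrow> 'a \<Rightarrow> nat \<Rightarrow> real) (p :: nat) (\<tau> :: nat)
      (\<mu>1 :: nat \<Rightarrow> real) (\<mu>2 :: nat \<Rightarrow> real) (\<sigma> :: real) (t :: nat).
     prob_space M \<and> \<sigma> > 0 \<and> \<tau> \<ge> 1 \<and>
     prob_space.indep_vars M (\<lambda>_. borel) (\<lambda>(i, j) \<omega>. Y i \<omega> j) ({1..} \<times> {..<p}) \<and>
     (\<forall>i\<ge>1. \<forall>j<p. distributed M lborel (\<lambda>\<omega>. Y i \<omega> j)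
                    (normal_density (if i \<le> \<tau> then \<mu>1 j else \<mu>2 j) \<sigma>)) \<and>
     card {j. j < p \<and> \<mu>1 j \<noteq> \<mu>2 j} \<ge> 1 \<and>
     t > \<tau>
     \<longrightarrow>
     (let k = card {j. j < p \<and> \<mu>1 j \<noteq> \<mu>2 j};
          \<phi> = sqrt (\<Sum>j<p. (\<mu>1 j - \<mu>2 j)\<^sup>2)
      in \<exists>s \<in> Sgrid p t.
          (real k < sqrt (real p * ln (real t)) \<longrightarrow> real k / 2 \<le> real s \<and> s \<le> k) \<and>
          (real k \<ge> sqrt (real p * ln (real t)) \<longrightarrow> s = p) \<and>
          (\<forall>\<delta> (lam :: real) (g :: nat). 0 < \<delta> \<and> \<delta> < 1 \<and> lam > 0 \<and> 1 \<le> g \<and> g \<le> t - \<tau> \<longrightarrow>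
            (let \<psi> = real g * (real \<tau>)\<^sup>2 / (real t * (real t - real g)) * \<phi>\<^sup>2 / \<sigma>\<^sup>2
             in measure M {\<omega> \<in> space M.
                  Astat p \<sigma> (\<lambda>i j. Y i \<omega> j) t s g - lam * zfun s p t
                  \<ge> \<psi> - (Cf \<delta> + 2 * lam) * zfun k p t - Cf \<delta> * sqrt \<psi>}
                \<ge> 1 - \<delta>))))"
proof (rule exI[of _ "\<lambda>\<delta>. 337 / sqrt \<delta>"], intro conjI allI impI, goal_cases)
  case (1 \<delta>)
  then show ?case by simp
next
  case (2 M Y p \<tau> \<mu>1 \<mu>2 \<sigma> t)
  then interpret prob_space M by simp
  have \<sigma>: "\<sigma> > 0" and \<tau>: "1 \<le> \<tau>" "\<tau> < t"
    and indep: "indep_vars (\<lambda>_. borel) (\<lambda>(i, j) \<omega>. Y i \<omega> j) ({1..} \<times> {..<p})"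
    and normal: "\<forall>i\<ge>1. \<forall>j<p. distributed M lborel (\<lambda>\<omega>. Y i \<omega> j)
      (normal_density (if i \<le> \<tau> then \<mu>1 j else \<mu>2 j) \<sigma>)"
    using 2 by auto
  define k where "k = card {j. j < p \<and> \<mu>1 j \<noteq> \<mu>2 j}"
  have k: "1 \<le> k" "k \<le> p"
    using 2 unfolding k_def by (auto intro: order_trans[OF card_mono[of "{..<p}"]])
  obtain s where s: "s \<in> Sgrid p t"
    and sparse: "real k < sqrt (real p * ln (real t)) \<Longrightarrow> real k / 2 \<le> real s \<and> s \<le> k"
    and dense: "sqrt (real p * ln (real t)) \<le> real k \<Longrightarrow> s = p"
    using Sgrid_choice[OF k, where t = t] by blast
  show ?case
    unfolding Let_def k_def[symmetric]
    by (intro bexI[OF _ s] conjI impI allI sparse dense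
        Astat_lower_bound[OF \<sigma> indep normal, folded k_def, OF k(1) \<tau> _ _ sparse dense]) auto
qed

end
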